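(* Let $y\in(0,1]$ and $A_0>0$. For every $z=u+iv\in\mathbb G$, $$\Big|\Big(z+\frac{y-1}{z}\Big)^2-4y\Big|\ge\frac{4y}{5}\max\{\gamma(z),v\}\qquad\text{and}\qquad nv\sqrt{\Big|\Big(z+\frac{y-1}{z}\Big)^2-4y\Big|}\ge \frac{4y}{5}A_0 .$$
   Context: Region $\mathbb G$ (depending on $n$, $y$, $A_0$): $a=1-\sqrt y$, $b=1+\sqrt y$, $V=4\sqrt y$, $v_0=A_0/n$, $\kappa>0$ defined by $\frac1\pi\int_{|u|\le\kappa}\frac{du}{1+u^2}=\frac34$, $\varepsilon=(2v_0\kappa)^{2/3}$; for $z=u+iv$, $\gamma(z)=\min\{||u|-a|,|b-|u||\}$; $\mathbb G=\{z=u+iv: a+\varepsilon\le|u|\le b-\varepsilon,\ v_0/\sqrt{\gamma(z)}\le v\le V\}$. *)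

theory Defs
  imports "HOL-Analysis.Analysis"
begin

definition mp_a :: "real \<Rightarrow> real" where "mp_a y = 1 - sqrt y"
definition mp_b :: "real \<Rightarrow> real" where "mp_b y = 1 + sqrt y"
definition mp_V :: "real \<Rightarrow> real" where "mp_V y = 4 * sqrt y"
definition mp_v0 :: "nat \<Rightarrow> real \<Rightarrow> real" where "mp_v0 n A0 = A0 / real n"

definition mp_kappa :: real where
  "mp_kappa = (THE k. k > 0 \<and> (1 / pi) * integral {-k..k} (\<lambda>u. 1 / (1 + u\<^sup>2)) = 3 / 4)"

definition mp_eps :: "nat \<Rightarrow> real \<Rightarrow> real" where
  "mp_eps n A0 = (2 * mp_v0 n A0 * mp_kappa) powr (2 / 3)"

definition mp_gamma :: "real \<Rightarrow> complex \<Rightarrow> real" where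
  "mp_gamma y z = min \<bar>\<bar>Re z\<bar> - mp_a y\<bar> \<bar>mp_b y - \<bar>Re z\<bar>\<bar>"

definition mp_G :: "nat \<Rightarrow> real \<Rightarrow> real \<Rightarrow> complex set" where
  "mp_G n y A0 = {z. mp_a y + mp_eps n A0 \<le> \<bar>Re z\<bar> \<and> \<bar>Re z\<bar> \<le> mp_b y - mp_eps n A0
      \<and> mp_v0 n A0 / sqrt (mp_gamma y z) \<le> Im z \<and> Im z \<le> mp_V y}"

end

theory Submission
  imports Defs
begin

text \<open>With \<open>a = 1 - \<surd>y\<close> and \<open>b = 1 + \<surd>y\<close> the expression factors as
  \<open>(z\<^sup>2 - a\<^sup>2) (z\<^sup>2 - b\<^sup>2) / z\<^sup>2\<close>. By symmetry take \<open>Re z \<ge> 0\<close>; then \<open>|z + a|, |z + b| \<ge> |z|\<close>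
  cancel the denominator, and both \<open>|z - a|\<close>, \<open>|z - b|\<close> dominate \<open>max \<gamma> |v|\<close> while one of them
  dominates half the gap \<open>b - a = 2\<surd>y\<close>. Since \<open>\<surd>y \<ge> 4y/5\<close> this gives the first bound. On \<open>\<GG>\<close> the
  margin \<open>\<epsilon> > 0\<close> (which needs \<open>\<kappa> > 0\<close>) makes \<open>\<gamma>\<close> positive, and \<open>n v \<ge> A\<^sub>0 / \<surd>\<gamma>\<close> combined with the
  first bound \<open>X \<ge> (4y/5) \<gamma>\<close> for the modulus \<open>X\<close> cancels \<open>\<surd>\<gamma>\<close>, leaving \<open>n v \<surd>X \<ge> A\<^sub>0 \<surd>(4y/5) \<ge> (4y/5) A\<^sub>0\<close>.\<close>

lemma integral_inverse_one_plus_square: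
  fixes k :: real
  assumes "0 \<le> k"
  shows "integral {-k..k} (\<lambda>u. 1 / (1 + u\<^sup>2)) = 2 * arctan k"
proof -
  have "((\<lambda>u. 1 / (1 + u\<^sup>2)) has_integral (arctan k - arctan (-k))) {-k..k}"
  proof (rule fundamental_theorem_of_calculus)
    show "-k \<le> k" using assms by simp
  next
    fix x :: real
    have "(arctan has_real_derivative 1 / (1 + x\<^sup>2)) (at x within {-k..k})"
      using DERIV_arctan[of x] by (simp add: has_field_derivative_at_within divide_inverse)
    then show "(arctan has_vector_derivative 1 / (1 + x\<^sup>2)) (at x within {-k..k})"
      by (simp add: has_real_derivative_iff_has_vector_derivative)
  qed
  then show ?thesis
    by (simp add: integral_unique arctan_minus)
qed

lemma mp_kappa_eq: "mp_kappa = tan (3 * pi / 8)"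
  unfolding mp_kappa_def
proof (rule the_equality)
  have "0 < 3 * pi / 8" "3 * pi / 8 < pi / 2"
    by (simp_all add: pi_gt_zero)
  then have "0 < tan (3 * pi / 8)" and arctan: "arctan (tan (3 * pi / 8)) = 3 * pi / 8"
    by (simp_all add: tan_gt_zero arctan_tan)
  with pi_gt_zero show "0 < tan (3 * pi / 8) \<and>
      1 / pi * integral {- tan (3 * pi / 8)..tan (3 * pi / 8)} (\<lambda>u. 1 / (1 + u\<^sup>2)) = 3 / 4"
    by (simp add: integral_inverse_one_plus_square arctan)
next
  fix k :: real
  assume "0 < k \<and> 1 / pi * integral {-k..k} (\<lambda>u. 1 / (1 + u\<^sup>2)) = 3 / 4"
  then have k: "0 \<le> k" and "1 / pi * integral {-k..k} (\<lambda>u. 1 / (1 + u\<^sup>2)) = 3 / 4"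
    by auto
  with integral_inverse_one_plus_square[OF k] have "arctan k = 3 * pi / 8"
    by (simp add: field_simps)
  then show "k = tan (3 * pi / 8)"
    by (metis tan_arctan)
qed

lemma mp_kappa_pos: "0 < mp_kappa"
  unfolding mp_kappa_eq by (rule tan_gt_zero) (simp_all add: pi_gt_zero)

lemma mp_eps_pos:
  assumes "0 < A0" "0 < n"
  shows "0 < mp_eps n A0"
  using assms mp_kappa_pos by (simp add: mp_eps_def mp_v0_def)

lemma self_le_real_sqrt:
  fixes x :: real
  assumes "0 \<le> x" "x \<le> 1"
  shows "x \<le> sqrt x"
  using assms by (intro real_le_rsqrt) (simp add: power2_eq_square mult_left_le)

lemma norm_le_norm_add_of_real:
  fixes z :: complex and c :: real
  assumes "0 \<le> Re z" "0 \<le> c"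
  shows "cmod z \<le> cmod (z + of_real c)"
  unfolding cmod_def using assms
  by (intro real_sqrt_le_mono) (simp add: power2_eq_square mult_mono)

lemma quartic_over_square_factor:
  fixes z s :: "'a :: field"
  assumes "z \<noteq> 0"
  shows "(z + (s\<^sup>2 - 1) / z)\<^sup>2 - 4 * s\<^sup>2 = (z\<^sup>2 - (1 - s)\<^sup>2) * (z\<^sup>2 - (1 + s)\<^sup>2) / z\<^sup>2"
  using assms by (simp add: field_simps power2_eq_square)

lemma norm_diff_mult_norm_diff_ge:
  fixes z :: complex and a b :: real
  shows "(b - a) / 2 * max (min \<bar>Re z - a\<bar> \<bar>b - Re z\<bar>) \<bar>Im z\<bar>
    \<le> cmod (z - of_real a) * cmod (z - of_real b)"
proof -
  let ?M = "max (min \<bar>Re z - a\<bar> \<bar>b - Re z\<bar>) \<bar>Im z\<bar>"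
  have za: "max \<bar>Re z - a\<bar> \<bar>Im z\<bar> \<le> cmod (z - of_real a)"
    using abs_Re_le_cmod[of "z - of_real a"] abs_Im_le_cmod[of "z - of_real a"] by simp
  have zb: "max \<bar>b - Re z\<bar> \<bar>Im z\<bar> \<le> cmod (z - of_real b)"
    using abs_Re_le_cmod[of "z - of_real b"] abs_Im_le_cmod[of "z - of_real b"] by simp
  have "(b - a) / 2 \<le> \<bar>Re z - a\<bar> \<or> (b - a) / 2 \<le> \<bar>b - Re z\<bar>"
    by (auto simp: abs_if field_simps)
  then show ?thesis
  proof
    assume "(b - a) / 2 \<le> \<bar>Re z - a\<bar>"
    then show ?thesis
      using za zb by (intro mult_mono) auto
  next
    assume "(b - a) / 2 \<le> \<bar>b - Re z\<bar>"
    then have "(b - a) / 2 * ?M \<le> cmod (z - of_real b) * cmod (z - of_real a)"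
      using za zb by (intro mult_mono) auto
    then show ?thesis by (simp add: mult.commute)
  qed
qed

lemma norm_quartic_over_square_ge:
  fixes z :: complex and a b :: real
  assumes "z \<noteq> 0" "0 \<le> a" "0 \<le> b"
  shows "(b - a) / 2 * max (min \<bar>\<bar>Re z\<bar> - a\<bar> \<bar>b - \<bar>Re z\<bar>\<bar>) \<bar>Im z\<bar>
    \<le> cmod ((z\<^sup>2 - (of_real a)\<^sup>2) * (z\<^sup>2 - (of_real b)\<^sup>2) / z\<^sup>2)"
proof -
  \<comment> \<open>Both sides are invariant under \<open>z \<mapsto> -z\<close>; in the right half-plane the factors
      \<open>z + a\<close>, \<open>z + b\<close> are at least as long as \<open>z\<close> and absorb the denominator.\<close>
  define w where "w = (if 0 \<le> Re z then z else - z)"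
  have w: "w\<^sup>2 = z\<^sup>2" "Re w = \<bar>Re z\<bar>" "\<bar>Im w\<bar> = \<bar>Im z\<bar>" "w \<noteq> 0"
    using assms(1) by (auto simp: w_def)
  have "cmod w * cmod w \<le> cmod (w + of_real a) * cmod (w + of_real b)"
    using w(2) assms(2,3) by (intro mult_mono norm_le_norm_add_of_real) auto
  then have far: "1 \<le> cmod (w + of_real a) * cmod (w + of_real b) / (cmod w)\<^sup>2"
    using w(4) by (simp add: power2_eq_square)
  have "(b - a) / 2 * max (min \<bar>Re w - a\<bar> \<bar>b - Re w\<bar>) \<bar>Im w\<bar>
      \<le> cmod (w - of_real a) * cmod (w - of_real b)"
    by (rule norm_diff_mult_norm_diff_ge)
  also have "\<dots> \<le> cmod (w - of_real a) * cmod (w - of_real b)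
                    * (cmod (w + of_real a) * cmod (w + of_real b) / (cmod w)\<^sup>2)"
    using mult_left_mono[OF far, of "cmod (w - of_real a) * cmod (w - of_real b)"] by simp
  also have "\<dots> = cmod ((w\<^sup>2 - (of_real a)\<^sup>2) * (w\<^sup>2 - (of_real b)\<^sup>2) / w\<^sup>2)"
    by (simp add: power2_eq_square square_diff_square_factored norm_mult norm_divide)
  finally show ?thesis
    by (simp only: w)
qed

lemma norm_mp_discriminant_ge:
  fixes z :: complex and y :: real
  assumes "z \<noteq> 0" "0 \<le> y" "y \<le> 1"
  shows "sqrt y * max (mp_gamma y z) \<bar>Im z\<bar>
    \<le> cmod ((z + (complex_of_real y - 1) / z)\<^sup>2 - 4 * complex_of_real y)"
proof -
  define s where "s = sqrt y"
  have y: "complex_of_real y = (of_real s)\<^sup>2"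
    using assms(2) by (simp add: s_def flip: of_real_power)
  have "(z + (complex_of_real y - 1) / z)\<^sup>2 - 4 * complex_of_real y
      = (z\<^sup>2 - (of_real (mp_a y))\<^sup>2) * (z\<^sup>2 - (of_real (mp_b y))\<^sup>2) / z\<^sup>2"
    unfolding y mp_a_def mp_b_def s_def[symmetric] using assms(1)
    by (simp add: quartic_over_square_factor)
  moreover have "0 \<le> mp_a y" "0 \<le> mp_b y" "(mp_b y - mp_a y) / 2 = s"
    using assms(2,3) by (simp_all add: mp_a_def mp_b_def s_def)
  ultimately show ?thesis
    using norm_quartic_over_square_ge[OF assms(1), of "mp_a y" "mp_b y"]
    by (simp add: mp_gamma_def s_def)
qed

lemma mp_G_gamma_pos:
  assumes "0 < A0" "0 < n" "z \<in> mp_G n y A0"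
  shows "0 < mp_gamma y z"
  using assms(3) mp_eps_pos[OF assms(1,2)] by (auto simp: mp_G_def mp_gamma_def)

lemma mp_G_Im_ge:
  assumes "0 < n" "z \<in> mp_G n y A0"
  shows "A0 / sqrt (mp_gamma y z) \<le> real n * Im z"
proof -
  have "mp_v0 n A0 / sqrt (mp_gamma y z) \<le> Im z"
    using assms(2) by (simp add: mp_G_def)
  then have "real n * (mp_v0 n A0 / sqrt (mp_gamma y z)) \<le> real n * Im z"
    by (rule mult_left_mono) simp
  then show ?thesis
    using assms(1) by (simp add: mp_v0_def)
qed

lemma mp_G_Im_pos:
  assumes "0 < A0" "0 < n" "z \<in> mp_G n y A0"
  shows "0 < Im z"
proof -
  have "0 < A0 / sqrt (mp_gamma y z)"
    using assms(1) mp_G_gamma_pos[OF assms] by simp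
  also have "\<dots> \<le> real n * Im z"
    using assms(2,3) by (rule mp_G_Im_ge)
  finally show ?thesis
    by (simp add: zero_less_mult_iff)
qed

theorem mainTheorem13:
  fixes n :: nat and y A0 :: real and z :: complex
  assumes "n \<ge> 1" and "0 < y" and "y \<le> 1" and "A0 > 0"
    and "z \<in> mp_G n y A0"
  shows "cmod ((z + (complex_of_real y - 1) / z)\<^sup>2 - 4 * complex_of_real y)
           \<ge> 4 * y / 5 * max (mp_gamma y z) (Im z)
       \<and> real n * Im z * sqrt (cmod ((z + (complex_of_real y - 1) / z)\<^sup>2 - 4 * complex_of_real y))
           \<ge> 4 * y / 5 * A0"
proof -
  let ?X = "cmod ((z + (complex_of_real y - 1) / z)\<^sup>2 - 4 * complex_of_real y)"
  let ?\<gamma> = "mp_gamma y z" and ?c = "4 * y / 5"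
  have n: "0 < n" and c: "0 \<le> ?c" "?c \<le> sqrt y" "?c \<le> 1"
    using assms(1-3) self_le_real_sqrt[of y] by simp_all
  have \<gamma>: "0 < ?\<gamma>" and nv: "A0 / sqrt ?\<gamma> \<le> real n * Im z" and v: "0 < Im z"
    using mp_G_gamma_pos mp_G_Im_ge mp_G_Im_pos n assms(4,5) by blast+
  have "?c * max ?\<gamma> (Im z) \<le> sqrt y * max ?\<gamma> (Im z)"
    using c(2) \<gamma> by (intro mult_right_mono) auto
  also have "\<dots> \<le> ?X"
    using norm_mp_discriminant_ge[of z y] v assms(2,3) by (fastforce simp: abs_of_pos)
  finally have first: "?c * max ?\<gamma> (Im z) \<le> ?X" .
  have "A0 * ?c \<le> A0 * sqrt ?c"
    using self_le_real_sqrt[OF c(1,3)] assms(4) by simp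
  also have "\<dots> = A0 / sqrt ?\<gamma> * sqrt (?c * ?\<gamma>)"
    unfolding real_sqrt_mult using \<gamma> by simp
  also have "\<dots> \<le> real n * Im z * sqrt ?X"
  proof (intro mult_mono)
    have "?c * ?\<gamma> \<le> ?c * max ?\<gamma> (Im z)"
      using c(1) by (intro mult_left_mono) auto
    with first show "sqrt (?c * ?\<gamma>) \<le> sqrt ?X"
      by simp
  qed (use nv n v \<gamma> assms(2) in auto)
  finally show ?thesis
    using first by (simp add: mult.commute)
qed

end
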